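(* Suppose GDD message passing reaches a fixed point in finitely many steps, i.e. it reaches messages $\boldsymbol\lambda$ such that performing the block update for any $c\in\mathcal{C}'$ does not change $\boldsymbol\lambda$. Let $b_t$, $t\in\mathcal{T}$, be the beliefs for these messages. Then for every $c\in\mathcal{C}'$ and every $s\in\mathcal{S}(c)\setminus\{c\}$ there exist $\hat{\mathbf{x}}_c\in\arg\max_{\mathbf{x}_c}b_c(\mathbf{x}_c)$ and $\bar{\mathbf{x}}_s\in\arg\max_{\mathbf{x}_s}b_s(\mathbf{x}_s)$ such that the restriction $\hat{\mathbf{x}}_s$ of $\hat{\mathbf{x}}_c$ to $s$ equals $\bar{\mathbf{x}}_s$.
   Context: Let $\mathcal{V}=\{1,\dots,n\}$; each variable $x_i$ takes values in a finite set, $\mathbf{x}_s=(x_i)_{i\in s}$ for $s\subseteq\mathcal{V}$. Let $\mathcal{C}$ be a collection of subsets of $\mathcal{V}$ with real potentials $\theta_c(\mathbf{x}_c)$. Let $\mathcal{C}'$ be a finite collection of subsets of $\mathcal{V}$ and for each $c\in\mathcal{C}'$ let $\mathcal{S}(c)$ be a collection of subsets of $c$ (possibly containing $c$), with $\mathcal{S}(c)\setminus\{c\}\neq\emptyset$ and $\mathcal{C}'\cup\bigcup_c\mathcal{S}(c)\supseteq\mathcal{C}$; put $\mathcal{T}=\mathcal{C}'\cup\bigcup_{c\in\mathcal{C}'}\mathcal{S}(c)$. Messages are reals $\lambda_{c\to s}(\mathbf{x}_s)$, $c\in\mathcal{C}'$, $s\in\mathcal{S}(c)\setminus\{c\}$.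 For $t\in\mathcal{T}$: $\hat\theta_t=\mathbb{1}(t\in\mathcal{C})\theta_t$; $\gamma_t(\mathbf{x}_t)=\mathbb{1}(t\in\mathcal{C}')\sum_{\hat s\in\mathcal{S}(t)\setminus\{t\}}\lambda_{t\to\hat s}(\mathbf{x}_{\hat s})$; $\lambda_t(\mathbf{x}_t)=\sum_{c'\in\mathcal{C}':\,t\in\mathcal{S}(c')\setminus\{c'\}}\lambda_{c'\to t}(\mathbf{x}_t)$; beliefs $b_t=\hat\theta_t+\lambda_t-\gamma_t$. For $s\in\mathcal{S}(c)\setminus\{c\}$, $\lambda_s^{-c}(\mathbf{x}_s)=\sum_{\hat c\in\mathcal{C}':\,\hat c\ne c,\ s\in\mathcal{S}(\hat c)\setminus\{\hat c\}}\lambda_{\hat c\to s}(\mathbf{x}_s)$. GDD message passing starts from zero messages and repeatedly sweeps over $c\in\mathcal{C}'$, each time applying the block update: replace simultaneously every $\lambda_{c\to s}(\mathbf{x}_s)$, $s\in\mathcal{S}(c)\setminus\{c\}$, by $\lambda^*_{c\to s}(\mathbf{x}_s)=-\hat\theta_s(\mathbf{x}_s)+\gamma_s(\mathbf{x}_s)-\lambda_s^{-c}(\mathbf{x}_s)+\frac{1}{|\mathcal{S}(c)\setminus\{c\}|}\max_{\mathbf{x}_{c\setminus s}}[\hat\theta_c(\mathbf{x}_c)+\lambda_c(\mathbf{x}_c)+\sum_{\hat s\in\mathcal{S}(c)\setminus\{c\}}(\hat\theta_{\hat s}-\gamma_{\hat s}+\lambda^{-c}_{\hat s})(\mathbf{x}_{\hat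 s})]$, computed from the current messages. *)

theory Defs
  imports Complex_Main "HOL-Library.FuncSet"
begin

text \<open>Assignments to a set of variables s are extensional functions in PiE s D
 (D i is the finite value set of variable i).  Messages are represented as
 lam :: nat set => nat set => (nat => 'v) => real, lam c s x = lambda_{c->s}(x_s).\<close>

definition theta_hat :: "nat set set \<Rightarrow> (nat set \<Rightarrow> (nat \<Rightarrow> 'v) \<Rightarrow> real) \<Rightarrow> nat set \<Rightarrow> (nat \<Rightarrow> 'v) \<Rightarrow> real" where
  "theta_hat C \<theta> t x = (if t \<in> C then \<theta> t x else 0)"

definition gamma :: "nat set set \<Rightarrow> (nat set \<Rightarrow> nat set set) \<Rightarrow> (nat set \<Rightarrow> nat set \<Rightarrow> (nat \<Rightarrow> 'v) \<Rightarrow> real)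
    \<Rightarrow> nat set \<Rightarrow> (nat \<Rightarrow> 'v) \<Rightarrow> real" where
  "gamma Cp S lam t x = (if t \<in> Cp then (\<Sum>s\<in>S t - {t}. lam t s (restrict x s)) else 0)"

definition lam_in :: "nat set set \<Rightarrow> (nat set \<Rightarrow> nat set set) \<Rightarrow> (nat set \<Rightarrow> nat set \<Rightarrow> (nat \<Rightarrow> 'v) \<Rightarrow> real)
    \<Rightarrow> nat set \<Rightarrow> (nat \<Rightarrow> 'v) \<Rightarrow> real" where
  "lam_in Cp S lam t x = (\<Sum>c'\<in>{c'\<in>Cp. t \<in> S c' - {c'}}. lam c' t x)"

definition lam_minus :: "nat set set \<Rightarrow> (nat set \<Rightarrow> nat set set) \<Rightarrow> (nat set \<Rightarrow> nat set \<Rightarrow> (nat \<Rightarrow> 'v) \<Rightarrow> real)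
    \<Rightarrow> nat set \<Rightarrow> nat set \<Rightarrow> (nat \<Rightarrow> 'v) \<Rightarrow> real" where
  "lam_minus Cp S lam c s x = (\<Sum>c'\<in>{c'\<in>Cp. c' \<noteq> c \<and> s \<in> S c' - {c'}}. lam c' s x)"

definition belief :: "nat set set \<Rightarrow> (nat set \<Rightarrow> (nat \<Rightarrow> 'v) \<Rightarrow> real) \<Rightarrow> nat set set \<Rightarrow> (nat set \<Rightarrow> nat set set)
    \<Rightarrow> (nat set \<Rightarrow> nat set \<Rightarrow> (nat \<Rightarrow> 'v) \<Rightarrow> real) \<Rightarrow> nat set \<Rightarrow> (nat \<Rightarrow> 'v) \<Rightarrow> real" where
  "belief C \<theta> Cp S lam t x = theta_hat C \<theta> t x + lam_in Cp S lam t x - gamma Cp S lam t x"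

text \<open>The optimal message lambda*_{c->s}(x_s); the max over x_{c \ s} is the max
 over all assignments y to c extending x.\<close>
definition msg_star :: "(nat \<Rightarrow> 'v set) \<Rightarrow> nat set set \<Rightarrow> (nat set \<Rightarrow> (nat \<Rightarrow> 'v) \<Rightarrow> real) \<Rightarrow> nat set set
    \<Rightarrow> (nat set \<Rightarrow> nat set set) \<Rightarrow> (nat set \<Rightarrow> nat set \<Rightarrow> (nat \<Rightarrow> 'v) \<Rightarrow> real)
    \<Rightarrow> nat set \<Rightarrow> nat set \<Rightarrow> (nat \<Rightarrow> 'v) \<Rightarrow> real" where
  "msg_star D C \<theta> Cp S lam c s x =
     - theta_hat C \<theta> s x + gamma Cp S lam s x - lam_minus Cp S lam c s x
     + (1 / real (card (S c - {c}))) *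
       Max ((\<lambda>y. theta_hat C \<theta> c y + lam_in Cp S lam c y
               + (\<Sum>s'\<in>S c - {c}. theta_hat C \<theta> s' (restrict y s') - gamma Cp S lam s' (restrict y s')
                                    + lam_minus Cp S lam c s' (restrict y s')))
            ` {y \<in> PiE c D. restrict y s = x})"

definition block_update :: "(nat \<Rightarrow> 'v set) \<Rightarrow> nat set set \<Rightarrow> (nat set \<Rightarrow> (nat \<Rightarrow> 'v) \<Rightarrow> real) \<Rightarrow> nat set set
    \<Rightarrow> (nat set \<Rightarrow> nat set set) \<Rightarrow> nat set \<Rightarrow> (nat set \<Rightarrow> nat set \<Rightarrow> (nat \<Rightarrow> 'v) \<Rightarrow> real)
    \<Rightarrow> (nat set \<Rightarrow> nat set \<Rightarrow> (nat \<Rightarrow> 'v) \<Rightarrow> real)" where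
  "block_update D C \<theta> Cp S c lam =
     (\<lambda>c' s x. if c' = c \<and> s \<in> S c - {c} \<and> x \<in> PiE s D
               then msg_star D C \<theta> Cp S lam c s x else lam c' s x)"

fun gdd_iter :: "(nat \<Rightarrow> 'v set) \<Rightarrow> nat set set \<Rightarrow> (nat set \<Rightarrow> (nat \<Rightarrow> 'v) \<Rightarrow> real) \<Rightarrow> nat set set
    \<Rightarrow> (nat set \<Rightarrow> nat set set) \<Rightarrow> nat set list \<Rightarrow> nat
    \<Rightarrow> (nat set \<Rightarrow> nat set \<Rightarrow> (nat \<Rightarrow> 'v) \<Rightarrow> real)" where
  "gdd_iter D C \<theta> Cp S ord 0 = (\<lambda>_ _ _. 0)"
| "gdd_iter D C \<theta> Cp S ord (Suc m) =
     block_update D C \<theta> Cp S (ord ! (m mod length ord)) (gdd_iter D C \<theta> Cp S ord m)"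

definition argmax_on :: "'a set \<Rightarrow> ('a \<Rightarrow> real) \<Rightarrow> 'a set" where
  "argmax_on A f = {x \<in> A. \<forall>y\<in>A. f y \<le> f x}"

end

theory Submission
  imports Defs
begin

text \<open>At a fixed point of the block update for \<open>c\<close>, every belief \<open>b\<^sub>s\<close>,
  \<open>s \<in> S(c) - {c}\<close>, is the max-marginal on \<open>s\<close> of the block objective \<open>M\<^sub>c\<close> divided by
  \<open>k = |S(c) - {c}|\<close>, while \<open>b\<^sub>c = M\<^sub>c - \<Sum>\<^sub>s b\<^sub>s\<close>. A maximiser of \<open>M\<^sub>c\<close> therefore
  restricts to a maximiser of every \<open>b\<^sub>s\<close>, each attaining \<open>max M\<^sub>c / k\<close>; and since
  \<open>b\<^sub>s(x\<^sub>s) \<ge> M\<^sub>c(x\<^sub>c) / k\<close> for every \<open>x\<^sub>c\<close>, we get \<open>b\<^sub>c \<le> 0\<close> with equality at that maximiser.\<close>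

lemma argmax_on_nonempty:
  fixes f :: "'a \<Rightarrow> real"
  assumes "finite A" "A \<noteq> {}"
  shows "argmax_on A f \<noteq> {}"
proof -
  have "Max (f ` A) \<in> f ` A" using assms by simp
  then obtain x where "x \<in> A" "f x = Max (f ` A)" by auto
  then have "x \<in> argmax_on A f"
    using assms by (auto simp: argmax_on_def)
  then show ?thesis by blast
qed

lemma max_marginal_le_Max:
  fixes M :: "'a \<Rightarrow> real"
  assumes "finite P" "ys \<in> argmax_on P M" "{y \<in> P. r y = x} \<noteq> {}"
  shows "Max (M ` {y \<in> P. r y = x}) \<le> M ys"
  using assms by (subst Max_le_iff) (auto simp: argmax_on_def)

lemma le_max_marginal:
  fixes M :: "'a \<Rightarrow> real"
  assumes "finite P" "y \<in> P"
  shows "M y \<le> Max (M ` {y' \<in> P. r y' = r y})"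
  using assms by (intro Max_ge) auto

lemma max_marginal_at_argmax:
  fixes M :: "'a \<Rightarrow> real"
  assumes "finite P" "ys \<in> argmax_on P M"
  shows "Max (M ` {y \<in> P. r y = r ys}) = M ys"
proof -
  have "ys \<in> P" using assms(2) by (simp add: argmax_on_def)
  then have "{y \<in> P. r y = r ys} \<noteq> {}" by blast
  from le_max_marginal[OF assms(1) \<open>ys \<in> P\<close>, of M r] max_marginal_le_Max[OF assms this]
  show ?thesis by linarith
qed

text \<open>\<open>M\<close> stands for the block objective on the assignments \<open>P\<close> of \<open>c\<close>, \<open>r s\<close> for
  restriction to \<open>s\<close>, and \<open>bs\<close>, \<open>bc\<close> for the beliefs.\<close>

lemma argmax_restricts_to_argmax_of_max_marginals:
  fixes P :: "'a set" and SS :: "'i set" and Q :: "'i \<Rightarrow> 'b set" and r :: "'i \<Rightarrow> 'a \<Rightarrow> 'b"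
    and M bc :: "'a \<Rightarrow> real" and bs :: "'i \<Rightarrow> 'b \<Rightarrow> real"
  assumes P: "finite P" and SS: "finite SS" "SS \<noteq> {}"
    and r_into: "\<And>s y. s \<in> SS \<Longrightarrow> y \<in> P \<Longrightarrow> r s y \<in> Q s"
    and r_onto: "\<And>s x. s \<in> SS \<Longrightarrow> x \<in> Q s \<Longrightarrow> \<exists>y\<in>P. r s y = x"
    and bs: "\<And>s x. s \<in> SS \<Longrightarrow> x \<in> Q s \<Longrightarrow>
               bs s x = Max (M ` {y \<in> P. r s y = x}) / real (card SS)"
    and bc: "\<And>y. y \<in> P \<Longrightarrow> bc y = M y - (\<Sum>s\<in>SS. bs s (r s y))"
    and ys: "ys \<in> argmax_on P M"
  shows "ys \<in> argmax_on P bc" and "\<And>s. s \<in> SS \<Longrightarrow> r s ys \<in> argmax_on (Q s) (bs s)"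
proof -
  define k where "k = real (card SS)"
  have k: "k > 0" using SS by (simp add: k_def card_gt_0_iff)
  have ys_P: "ys \<in> P" using ys by (simp add: argmax_on_def)
  have bs_ys: "bs s (r s ys) = M ys / k" if "s \<in> SS" for s
    using bs[OF that r_into[OF that ys_P]] max_marginal_at_argmax[OF P ys, of "r s"]
    by (simp add: k_def)
  have bs_ge: "M y / k \<le> bs s (r s y)" if "s \<in> SS" "y \<in> P" for s y
    using bs[OF that(1) r_into[OF that]] le_max_marginal[OF P that(2), of M "r s"] k
    by (simp add: k_def divide_right_mono)
  have sum_const: "(\<Sum>s\<in>SS. z / k) = z" for z
    using k by (simp add: k_def)
  have "bc ys = 0"
    using bc[OF ys_P] bs_ys sum_const by simp
  moreover have "bc y \<le> 0" if "y \<in> P" for y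
  proof -
    have "M y = (\<Sum>s\<in>SS. M y / k)" by (rule sum_const[symmetric])
    also have "\<dots> \<le> (\<Sum>s\<in>SS. bs s (r s y))" using bs_ge that by (intro sum_mono)
    finally show ?thesis using bc that by simp
  qed
  ultimately show "ys \<in> argmax_on P bc"
    using ys_P by (simp add: argmax_on_def)
  fix s assume s: "s \<in> SS"
  have "bs s x \<le> bs s (r s ys)" if "x \<in> Q s" for x
  proof -
    have "{y \<in> P. r s y = x} \<noteq> {}" using r_onto s that by auto
    then have "Max (M ` {y \<in> P. r s y = x}) / k \<le> M ys / k"
      using max_marginal_le_Max[OF P ys, of "r s" x] k by (simp add: divide_right_mono)
    moreover have "bs s x = Max (M ` {y \<in> P. r s y = x}) / k"
      using bs[OF s that] by (simp add: k_def)
    ultimately show ?thesis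
      using bs_ys[OF s] by linarith
  qed
  then show "r s ys \<in> argmax_on (Q s) (bs s)"
    unfolding argmax_on_def using r_into[OF s ys_P] by blast
qed

lemma restrict_PiE_surj:
  assumes "s \<subseteq> c" "\<forall>i\<in>c. D i \<noteq> {}" "x \<in> PiE s D"
  shows "\<exists>y\<in>PiE c D. restrict y s = x"
proof -
  have "PiE c D \<noteq> {}" using assms(2) by (simp add: PiE_eq_empty_iff)
  then obtain z where z: "z \<in> PiE c D" by blast
  define y where "y = (\<lambda>i. if i \<in> s then x i else z i)"
  have "y \<in> PiE c D" "restrict y s = x"
    using assms z by (auto simp: y_def PiE_iff extensional_def)
  then show ?thesis by blast
qed

text \<open>The function whose max-marginals appear in \<open>msg_star\<close>.\<close>

definition block_objective :: "nat set set \<Rightarrow> (nat set \<Rightarrow> (nat \<Rightarrow> 'v) \<Rightarrow> real) \<Rightarrow> nat set set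
    \<Rightarrow> (nat set \<Rightarrow> nat set set) \<Rightarrow> (nat set \<Rightarrow> nat set \<Rightarrow> (nat \<Rightarrow> 'v) \<Rightarrow> real)
    \<Rightarrow> nat set \<Rightarrow> (nat \<Rightarrow> 'v) \<Rightarrow> real" where
  "block_objective C \<theta> Cp S lam c y = theta_hat C \<theta> c y + lam_in Cp S lam c y
     + (\<Sum>s\<in>S c - {c}. theta_hat C \<theta> s (restrict y s) - gamma Cp S lam s (restrict y s)
                        + lam_minus Cp S lam c s (restrict y s))"

lemma lam_in_eq_lam_plus_lam_minus:
  assumes "finite Cp" "c \<in> Cp" "s \<in> S c - {c}"
  shows "lam_in Cp S lam s x = lam c s x + lam_minus Cp S lam c s x"
proof -
  have "{c' \<in> Cp. c' \<noteq> c \<and> s \<in> S c' - {c'}} = {c' \<in> Cp. s \<in> S c' - {c'}} - {c}"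
    by auto
  then show ?thesis
    unfolding lam_in_def lam_minus_def using assms by (subst sum.remove[of _ c]) auto
qed

lemma belief_eq_max_marginal_at_fixpoint:
  assumes "finite Cp" "c \<in> Cp" "s \<in> S c - {c}" "x \<in> PiE s D"
    and "block_update D C \<theta> Cp S c lam = lam"
  shows "belief C \<theta> Cp S lam s x =
           Max (block_objective C \<theta> Cp S lam c ` {y \<in> PiE c D. restrict y s = x}) / real (card (S c - {c}))"
proof -
  have "block_update D C \<theta> Cp S c lam c s x = lam c s x"
    using assms(5) by simp
  then have "msg_star D C \<theta> Cp S lam c s x = lam c s x"
    using assms(3,4) by (simp add: block_update_def)
  then show ?thesis
    using lam_in_eq_lam_plus_lam_minus[where S = S, OF assms(1-3), of lam x]
    unfolding belief_def msg_star_def block_objective_def by (simp add: field_simps)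
qed

lemma belief_eq_block_objective_minus_beliefs:
  assumes "finite Cp" "c \<in> Cp"
  shows "belief C \<theta> Cp S lam c y =
           block_objective C \<theta> Cp S lam c y - (\<Sum>s\<in>S c - {c}. belief C \<theta> Cp S lam s (restrict y s))"
proof -
  have "(\<Sum>s\<in>S c - {c}. belief C \<theta> Cp S lam s (restrict y s))
      = (\<Sum>s\<in>S c - {c}. lam c s (restrict y s))
        + (\<Sum>s\<in>S c - {c}. theta_hat C \<theta> s (restrict y s) - gamma Cp S lam s (restrict y s)
                           + lam_minus Cp S lam c s (restrict y s))"
    unfolding sum.distrib[symmetric] belief_def
    using lam_in_eq_lam_plus_lam_minus[where S = S, OF assms] by (intro sum.cong) auto
  moreover have "gamma Cp S lam c y = (\<Sum>s\<in>S c - {c}. lam c s (restrict y s))"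
    using assms(2) by (simp add: gamma_def)
  ultimately show ?thesis
    using belief_def[of C \<theta> Cp S lam c y] block_objective_def[of C \<theta> Cp S lam c y] by linarith
qed

lemma block_objective_argmax_restricts_to_belief_argmax:
  assumes Cp: "finite Cp" "c \<in> Cp" and fixpt: "block_update D C \<theta> Cp S c lam = lam"
    and dom: "finite c" "\<forall>i\<in>c. finite (D i) \<and> D i \<noteq> {}"
    and S: "S c \<subseteq> Pow c" "S c - {c} \<noteq> {}"
    and ys: "ys \<in> argmax_on (PiE c D) (block_objective C \<theta> Cp S lam c)"
  shows "ys \<in> argmax_on (PiE c D) (belief C \<theta> Cp S lam c)"
    and "\<And>s. s \<in> S c - {c} \<Longrightarrow> restrict ys s \<in> argmax_on (PiE s D) (belief C \<theta> Cp S lam s)"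
proof -
  have SS: "finite (S c - {c})" "\<And>s. s \<in> S c - {c} \<Longrightarrow> s \<subseteq> c"
    using S dom(1) by (auto intro: finite_subset[of _ "Pow c"])
  have P: "finite (PiE c D)"
    using dom by (auto intro: finite_PiE)
  have restrict_into: "restrict y s \<in> PiE s D" if "s \<in> S c - {c}" "y \<in> PiE c D" for s y
    using that SS(2) by (auto simp: PiE_iff)
  have restrict_onto: "\<exists>y\<in>PiE c D. restrict y s = x" if "s \<in> S c - {c}" "x \<in> PiE s D" for s x
    using that SS(2) dom(2) by (intro restrict_PiE_surj) auto
  have max_marginal: "belief C \<theta> Cp S lam s x =
      Max (block_objective C \<theta> Cp S lam c ` {y \<in> PiE c D. restrict y s = x}) / real (card (S c - {c}))"
    if "s \<in> S c - {c}" "x \<in> PiE s D" for s x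
    using belief_eq_max_marginal_at_fixpoint[OF Cp that fixpt] .
  have block_belief: "belief C \<theta> Cp S lam c y = block_objective C \<theta> Cp S lam c y
      - (\<Sum>s\<in>S c - {c}. belief C \<theta> Cp S lam s (restrict y s))" if "y \<in> PiE c D" for y
    using belief_eq_block_objective_minus_beliefs[OF Cp] .
  note argmax = argmax_restricts_to_argmax_of_max_marginals
      [where r = "\<lambda>s y. restrict y s" and Q = "\<lambda>s. PiE s D" and bs = "belief C \<theta> Cp S lam"
         and M = "block_objective C \<theta> Cp S lam c" and bc = "belief C \<theta> Cp S lam c"
         and P = "PiE c D" and SS = "S c - {c}"]
  show "ys \<in> argmax_on (PiE c D) (belief C \<theta> Cp S lam c)"
    using P SS(1) S(2) restrict_into restrict_onto max_marginal block_belief ys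
    by (rule argmax(1))
  show "restrict ys s \<in> argmax_on (PiE s D) (belief C \<theta> Cp S lam s)" if "s \<in> S c - {c}" for s
    using P SS(1) S(2) restrict_into restrict_onto max_marginal block_belief ys that
    by (rule argmax(2))
qed

theorem proposition4:
  fixes n :: nat and D :: "nat \<Rightarrow> 'v set"
    and C Cp :: "nat set set" and S :: "nat set \<Rightarrow> nat set set"
    and \<theta> :: "nat set \<Rightarrow> (nat \<Rightarrow> 'v) \<Rightarrow> real"
    and ord :: "nat set list" and m :: nat
    and lam :: "nat set \<Rightarrow> nat set \<Rightarrow> (nat \<Rightarrow> 'v) \<Rightarrow> real"
  assumes dom: "\<forall>i\<in>{1..n}. finite (D i) \<and> D i \<noteq> {}"
    and C_sub: "\<forall>c\<in>C. c \<subseteq> {1..n}"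
    and Cp_fin: "finite Cp"
    and Cp_sub: "\<forall>c\<in>Cp. c \<subseteq> {1..n}"
    and S_sub: "\<forall>c\<in>Cp. S c \<subseteq> Pow c \<and> S c - {c} \<noteq> {}"
    and cover: "C \<subseteq> Cp \<union> \<Union>(S ` Cp)"
    and ord: "distinct ord" "set ord = Cp"
    and reached: "lam = gdd_iter D C \<theta> Cp S ord m"
    and fixpt: "\<forall>c\<in>Cp. block_update D C \<theta> Cp S c lam = lam"
  shows "\<forall>c\<in>Cp. \<forall>s\<in>S c - {c}.
           \<exists>xc\<in>argmax_on (PiE c D) (belief C \<theta> Cp S lam c).
           \<exists>xs\<in>argmax_on (PiE s D) (belief C \<theta> Cp S lam s).
             restrict xc s = xs"
proof (intro ballI)
  fix c s assume c: "c \<in> Cp" and s: "s \<in> S c - {c}"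
  have dom_c: "finite c" "\<forall>i\<in>c. finite (D i) \<and> D i \<noteq> {}"
    using Cp_sub c dom finite_subset[of c "{1..n}"] by auto
  have "finite (PiE c D)" "PiE c D \<noteq> {}"
    using dom_c by (auto intro: finite_PiE simp: PiE_eq_empty_iff)
  then obtain ys where ys: "ys \<in> argmax_on (PiE c D) (block_objective C \<theta> Cp S lam c)"
    using argmax_on_nonempty by blast
  have "S c \<subseteq> Pow c" "S c - {c} \<noteq> {}" using S_sub c by auto
  note argmax = block_objective_argmax_restricts_to_belief_argmax
      [OF Cp_fin c fixpt[rule_format, OF c] dom_c this ys]
  show "\<exists>xc\<in>argmax_on (PiE c D) (belief C \<theta> Cp S lam c).
          \<exists>xs\<in>argmax_on (PiE s D) (belief C \<theta> Cp S lam s). restrict xc s = xs"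
    using argmax(1) argmax(2)[OF s] by blast
qed

end
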